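(* Let $n$ be a positive integer and let $D$ be a set of divisors of $n$ such that $\gcd(D\cup\{n\})=1$. Let $t$ be the size of a smallest subset of $D$ which generates $\mathbb{Z}_n$ as an additive group. Let $S=\bigcup_{d\in D}G_n(d)$ and $\mathcal G=G(n;S)$. Then $$t\leq \operatorname{diam}\mathcal G\leq 2t+1.$$
   Context: For a divisor $d$ of $n$, $G_n(d)=\{k : 1\le k\le n-1,\ \gcd(k,n)=d\}$. For a set $S\subseteq\{1,\dots,n-1\}$ with $s\in S$ iff $n-s\in S$, the circulant graph $G(n;S)$ is the undirected graph on vertex set $\mathbb{Z}_n$ in which $i$ and $j$ are adjacent iff $i-j \bmod n\in S$. $\operatorname{diam}$ denotes the graph diameter (maximum over vertex pairs of the shortest-path distance). *)

theory Defs
  imports Main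
begin

definition Gn :: "nat \<Rightarrow> nat \<Rightarrow> nat set" where
  "Gn n d = {k. 1 \<le> k \<and> k \<le> n - 1 \<and> gcd k n = d}"

definition circ_edges :: "nat \<Rightarrow> nat set \<Rightarrow> (nat \<times> nat) set" where
  "circ_edges n S = {(i, j). i < n \<and> j < n \<and> nat ((int i - int j) mod int n) \<in> S}"

definition circ_dist :: "nat \<Rightarrow> nat set \<Rightarrow> nat \<Rightarrow> nat \<Rightarrow> nat" where
  "circ_dist n S i j = (LEAST k. (i, j) \<in> (circ_edges n S) ^^ k)"

definition circ_diam :: "nat \<Rightarrow> nat set \<Rightarrow> nat" where
  "circ_diam n S = Max {circ_dist n S i j | i j. i < n \<and> j < n}"

definition generates_Zn :: "nat \<Rightarrow> nat set \<Rightarrow> bool" where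
  "generates_Zn n D' = (\<forall>x::int. \<exists>c :: nat \<Rightarrow> int. x mod int n = (\<Sum>d\<in>D'. c d * int d) mod int n)"

end

theory Submission
  imports Defs "HOL-Number_Theory.Number_Theory"
begin

text \<open>
  A walk of length k from 1 to 0 in G(n;S) writes 1 modulo n as a sum of k elements of S; each
  of them lies in some G_n(d) and is thus a multiple of d, so at most k elements of D generate
  Z_n.

  Conversely, let D0 be a generating subset of D of size t and write x = sum of c_d d over D0.
  The set G_n(d) consists of the residues d u with u a unit modulo n/d, and every residue
  modulo m is a sum of two units unless m is even and the residue odd. So every multiple
  c_d d is a sum of two elements of G_n(d), which gives 2t steps, except when n is even and x
  odd; then some d in D0 is odd, d itself lies in G_n(d), and subtracting it first costs one
  more step.
\<close>

lemma coprime_if_no_prime_divisor: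
  fixes a b :: "'a :: factorial_semiring"
  assumes "b \<noteq> 0" and "\<And>p. prime p \<Longrightarrow> p dvd b \<Longrightarrow> \<not> p dvd a"
  shows "coprime a b"
proof (rule coprimeI)
  fix c assume "c dvd a" "c dvd b"
  show "is_unit c"
  proof (rule ccontr)
    assume "\<not> is_unit c"
    moreover have "c \<noteq> 0" using \<open>c dvd b\<close> assms(1) by auto
    ultimately obtain p where "p dvd c" "prime p" using prime_divisor_exists by blast
    then show False using assms(2) \<open>c dvd a\<close> \<open>c dvd b\<close> dvd_trans by blast
  qed
qed

lemma pow_fact_cong_1:
  fixes a p m :: nat
  assumes "prime p" "p dvd m" "m > 0" "\<not> p dvd a"
  shows "[a ^ fact m = 1] (mod p)"
proof -
  have "p - 1 dvd fact m"
    using assms prime_ge_2_nat[OF assms(1)] by (intro dvd_fact) (auto dest: dvd_imp_le)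
  then obtain q where "fact m = (p - 1) * q" by blast
  moreover have "[(a ^ (p - 1)) ^ q = 1 ^ q] (mod p)"
    using fermat_theorem[OF assms(1,4)] by (rule cong_pow)
  ultimately show ?thesis by (simp add: power_mult)
qed

lemma sum_of_two_units:
  fixes a m :: nat
  assumes "m > 0" and "odd m \<or> even a"
  shows "\<exists>u v. coprime u (int m) \<and> coprime v (int m) \<and> u + v = int a"
proof -
  \<comment> \<open>Modulo a prime p dividing m: u = 1 and a - u = -1 if p divides a; otherwise
    a^(m!) = 1 by Fermat, since p - 1 divides m!, so u = -a and a - u = 2a.\<close>
  define u where "u = 1 - int a ^ fact m * (1 + int a)"
  have "\<not> p dvd u \<and> \<not> p dvd (int a - u)" if "prime p" "p dvd int m" for p
  proof -
    define q where "q = nat p"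
    have q: "p = int q" using prime_ge_0_int[OF that(1)] by (simp add: q_def)
    then have "prime q" "q dvd m" using that by simp_all
    have not_dvd_1: "\<not> p dvd 1" "\<not> p dvd -1" using that(1) by auto
    show ?thesis
    proof (cases "p dvd int a")
      case True
      then have "p dvd int a ^ fact m * (1 + int a)"
        by (metis dvd_mult2 dvd_power dvd_trans fact_gt_zero)
      then have "[u = 1] (mod p)" unfolding u_def by (simp add: cong_iff_dvd_diff)
      moreover from this have "[int a - u = -1] (mod p)"
        using True by (metis cong_diff cong_0_iff diff_0)
      ultimately show ?thesis using not_dvd_1 by (metis cong_dvd_iff)
    next
      case False
      have "[int a ^ fact m = 1] (mod p)"
        using pow_fact_cong_1[OF \<open>prime q\<close> \<open>q dvd m\<close> assms(1)] False q
        by (metis cong_int_iff int_dvd_int_iff of_nat_1 of_nat_power)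
      then have "[int a ^ fact m * (1 + int a) = 1 * (1 + int a)] (mod p)"
        by (rule cong_mult) simp
      then have "[u = 1 - 1 * (1 + int a)] (mod p)" unfolding u_def
        by (rule cong_diff[OF cong_refl])
      then have "[u = - int a] (mod p)" by simp
      moreover from this have "[int a - u = 2 * int a] (mod p)"
        by (metis cong_diff cong_refl diff_minus_eq_add mult_2)
      moreover have "\<not> p dvd 2 * int a"
      proof
        assume "p dvd 2 * int a"
        then have "p dvd 2" using False that(1) prime_dvd_mult_iff by blast
        then have "p \<le> 2" by (rule zdvd_imp_le) simp
        then have "p = 2" using prime_ge_2_int[OF that(1)] by simp
        then show False using assms(2) False that(2) by auto
      qed
      ultimately show ?thesis using False by (metis cong_dvd_iff dvd_minus_iff)
    qed
  qed
  then show ?thesis using assms(1)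
    by (intro exI[of _ u] exI[of _ "int a - u"]) (auto intro!: coprime_if_no_prime_divisor)
qed

definition sum_within :: "nat \<Rightarrow> nat set \<Rightarrow> nat \<Rightarrow> int \<Rightarrow> bool" where
  "sum_within n S k x \<longleftrightarrow>
     (\<exists>xs. length xs \<le> k \<and> set xs \<subseteq> S \<and> [x = int (sum_list xs)] (mod int n))"

lemma sum_within_0: "sum_within n S k 0"
  unfolding sum_within_def by (intro exI[of _ "[]"]) simp

lemma sum_within_single: "s \<in> S \<Longrightarrow> sum_within n S 1 (int s)"
  unfolding sum_within_def by (intro exI[of _ "[s]"]) simp

lemma sum_within_mono:
  "sum_within n S k x \<Longrightarrow> k \<le> l \<Longrightarrow> S \<subseteq> T \<Longrightarrow> sum_within n T l x"
  unfolding sum_within_def using le_trans subset_trans by meson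

lemma sum_within_cong:
  "sum_within n S k x \<Longrightarrow> [x = y] (mod int n) \<Longrightarrow> sum_within n S k y"
  unfolding sum_within_def by (meson cong_sym cong_trans)

lemma sum_within_add:
  assumes "sum_within n S k x" and "sum_within n S l y"
  shows "sum_within n S (k + l) (x + y)"
proof -
  obtain xs ys where "length xs \<le> k" "set xs \<subseteq> S" "[x = int (sum_list xs)] (mod int n)"
    and "length ys \<le> l" "set ys \<subseteq> S" "[y = int (sum_list ys)] (mod int n)"
    using assms unfolding sum_within_def by blast
  then show ?thesis
    unfolding sum_within_def by (intro exI[of _ "xs @ ys"]) (auto intro: cong_add)
qed

lemma ex_Gn_cong_mult:
  assumes "d dvd n" "d < n" and "coprime u (int (n div d))"
  shows "\<exists>s\<in>Gn n d. [int d * u = int s] (mod int n)"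
proof -
  define s where "s = nat ((int d * u) mod int n)"
  have s_int: "int s = (int d * u) mod int n" using assms(2) unfolding s_def by simp
  have "int n = int d * int (n div d)" using assms(1) by (simp flip: of_nat_mult)
  then have "gcd (int d * u) (int n) = int d * gcd u (int (n div d))"
    by (simp add: gcd_mult_left)
  also have "\<dots> = int d" using assms(3) by simp
  finally have "gcd (int s) (int n) = int d" unfolding s_int using assms(2) by simp
  then have "gcd s n = d" by (metis gcd_int_int_eq of_nat_eq_iff)
  moreover have "int s < int n" using s_int assms(2) by simp
  moreover have "s \<noteq> 0" using \<open>gcd s n = d\<close> assms(2) by (cases s) auto
  ultimately have "s \<in> Gn n d" unfolding Gn_def by auto
  then show ?thesis by (intro bexI[of _ s]) (simp_all add: s_int cong_def)
qed

text \<open>If n/d is even, every unit modulo n/d is odd, so even c is needed for the sum of two.\<close>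

lemma sum_within_multiple_of_divisor:
  assumes "n > 0" "d dvd n" and "odd (n div d) \<or> even c"
  shows "sum_within n (Gn n d) 2 (c * int d)"
proof (cases "d = n")
  case True
  then have "[c * int d = 0] (mod int n)" by (simp add: cong_0_iff)
  then show ?thesis using sum_within_cong[OF sum_within_0 cong_sym] by blast
next
  case False
  then have "d < n" using assms(1,2) by (simp add: dvd_imp_le order.not_eq_order_implies_strict)
  define m where "m = n div d"
  have "m > 0" "n = m * d" using assms(1,2) unfolding m_def by auto
  define a where "a = nat (c mod int m)"
  have a: "int a = c mod int m" unfolding a_def using \<open>m > 0\<close> by simp
  have "odd m \<or> even a"
  proof (cases "odd m")
    case False
    then have "even (c mod int m)" using assms(3) unfolding m_def by (simp add: dvd_mod)
    then show ?thesis using a by (metis even_of_nat)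
  qed simp
  then obtain u v where uv: "coprime u (int m)" "coprime v (int m)" "u + v = int a"
    using sum_of_two_units \<open>m > 0\<close> by blast
  have "sum_within n (Gn n d) 1 (int d * w)" if w: "coprime w (int m)" for w
  proof -
    obtain s where s: "s \<in> Gn n d" "[int d * w = int s] (mod int n)"
      using ex_Gn_cong_mult[OF assms(2) \<open>d < n\<close>] w unfolding m_def by blast
    show ?thesis using sum_within_cong[OF sum_within_single[OF s(1)] cong_sym[OF s(2)]] .
  qed
  then have "sum_within n (Gn n d) (1 + 1) (int d * u + int d * v)"
    using uv by (intro sum_within_add)
  moreover have "[int d * u + int d * v = c * int d] (mod int n)"
  proof -
    have "[int a = c] (mod int m)" unfolding a by (simp add: cong_def)
    then have "[int a * int d = c * int d] (mod int m * int d)"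
      by (simp add: cong_iff_dvd_diff flip: left_diff_distrib)
    moreover have "int d * u + int d * v = int a * int d" using uv(3) by (simp flip: distrib_left)
    ultimately show ?thesis using \<open>n = m * d\<close> by simp
  qed
  ultimately show ?thesis using sum_within_cong by (metis one_add_one)
qed

lemma sum_within_lincomb:
  assumes "n > 0" "finite A"
    and "\<And>d. d \<in> A \<Longrightarrow> d dvd n \<and> (odd (n div d) \<or> even (c d))"
  shows "sum_within n (\<Union>d\<in>A. Gn n d) (2 * card A) (\<Sum>d\<in>A. c d * int d)"
  using assms(2,3)
proof (induction A rule: finite_induct)
  case empty
  show ?case using sum_within_0 by simp
next
  case (insert d A)
  have "sum_within n (Gn n d) 2 (c d * int d)"
    using sum_within_multiple_of_divisor[OF assms(1)] insert.prems by blast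
  then have "sum_within n (\<Union>e\<in>insert d A. Gn n e) 2 (c d * int d)"
    by (rule sum_within_mono) auto
  moreover have "sum_within n (\<Union>e\<in>A. Gn n e) (2 * card A) (\<Sum>e\<in>A. c e * int e)"
    using insert.IH insert.prems by blast
  then have "sum_within n (\<Union>e\<in>insert d A. Gn n e) (2 * card A) (\<Sum>e\<in>A. c e * int e)"
    by (rule sum_within_mono) auto
  ultimately show ?case
    using sum_within_add insert.hyps by fastforce
qed

lemma generates_Zn_iff:
  "generates_Zn n A \<longleftrightarrow> (\<exists>c. [1 = (\<Sum>d\<in>A. c d * int d)] (mod int n))"
proof
  assume "generates_Zn n A"
  then show "\<exists>c. [1 = (\<Sum>d\<in>A. c d * int d)] (mod int n)"
    unfolding generates_Zn_def cong_def by blast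
next
  assume "\<exists>c. [1 = (\<Sum>d\<in>A. c d * int d)] (mod int n)"
  then obtain c where c: "[1 = (\<Sum>d\<in>A. c d * int d)] (mod int n)" by blast
  show "generates_Zn n A" unfolding generates_Zn_def
  proof
    fix x :: int
    have "[x = (\<Sum>d\<in>A. (x * c d) * int d)] (mod int n)"
      using cong_scalar_left[OF c, of x] by (simp add: sum_distrib_left mult.assoc)
    then show "\<exists>c'. x mod int n = (\<Sum>d\<in>A. c' d * int d) mod int n"
      by (intro exI[of _ "\<lambda>d. x * c d"]) (simp add: cong_def)
  qed
qed

lemma Gcd_eq_lincomb:
  fixes A :: "nat set"
  assumes "finite A"
  shows "\<exists>c. int (Gcd A) = (\<Sum>a\<in>A. c a * int a)"
  using assms
proof (induction A rule: finite_induct)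
  case empty
  then show ?case by simp
next
  case (insert x A)
  then obtain c where c: "int (Gcd A) = (\<Sum>a\<in>A. c a * int a)" by blast
  obtain u v where uv: "u * int x + v * int (Gcd A) = gcd (int x) (int (Gcd A))"
    using bezout_int by blast
  define c' where "c' = (\<lambda>a. if a = x then u else v * c a)"
  have "(\<Sum>a\<in>A. c' a * int a) = (\<Sum>a\<in>A. v * (c a * int a))"
    using insert.hyps by (intro sum.cong) (auto simp: c'_def)
  then have "(\<Sum>a\<in>insert x A. c' a * int a) = u * int x + (\<Sum>a\<in>A. v * (c a * int a))"
    using insert.hyps by (simp add: c'_def)
  also have "\<dots> = u * int x + v * int (Gcd A)" by (simp add: c sum_distrib_left)
  also have "\<dots> = int (Gcd (insert x A))" using uv by (simp add: Gcd_insert)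
  finally show ?case by metis
qed

lemma generates_Zn_if_Gcd_eq_1:
  assumes "finite D" and "Gcd (D \<union> {n}) = 1"
  shows "generates_Zn n D"
proof -
  obtain c where c: "1 = (\<Sum>a\<in>insert n D. c a * int a)"
    using Gcd_eq_lincomb[of "insert n D"] assms by auto
  have "[(\<Sum>a\<in>insert n D. c a * int a) = (\<Sum>a\<in>D. c a * int a)] (mod int n)"
    using assms(1) by (cases "n \<in> D") (simp_all add: insert_absorb cong_def)
  then show ?thesis unfolding generates_Zn_iff using c by auto
qed

lemma self_mem_Gn:
  assumes "n > 0" "d dvd n" "d \<noteq> n"
  shows "d \<in> Gn n d"
proof -
  have "d \<le> n" "d \<noteq> 0" using assms(1,2) by (auto dest: dvd_imp_le)
  then show ?thesis using assms(2,3) unfolding Gn_def by (simp add: gcd_nat.absorb1)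
qed

lemma generates_Zn_even_ex_odd:
  assumes "even n" and "generates_Zn n A"
  shows "\<exists>d\<in>A. odd d"
proof (rule ccontr)
  assume "\<not> (\<exists>d\<in>A. odd d)"
  obtain c where c: "[1 = (\<Sum>d\<in>A. c d * int d)] (mod int n)"
    using assms(2) unfolding generates_Zn_iff by blast
  have "even (\<Sum>d\<in>A. c d * int d)" using \<open>\<not> (\<exists>d\<in>A. odd d)\<close> by (auto intro!: dvd_sum)
  moreover have "[1 = (\<Sum>d\<in>A. c d * int d)] (mod 2)"
    using cong_dvd_modulus[OF c] assms(1) by simp
  ultimately show False by (simp add: cong_def)
qed

lemma sum_within_if_generates_Zn:
  assumes "n > 0" "finite A" "\<And>d. d \<in> A \<Longrightarrow> d dvd n" and "generates_Zn n A"
  shows "sum_within n (\<Union>d\<in>A. Gn n d) (2 * card A + 1) x"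
proof -
  let ?S = "\<Union>d\<in>A. Gn n d"
  obtain c where c: "[1 = (\<Sum>d\<in>A. c d * int d)] (mod int n)"
    using assms(4) unfolding generates_Zn_iff by blast
  have within_2: "sum_within n ?S (2 * card A) z" if "odd n \<or> even z" for z
  proof -
    have "odd (n div d) \<or> even (z * c d)" if "d \<in> A" for d
    proof (cases "odd n")
      case True
      have "n div d dvd n" using assms(3)[OF that] by (metis dvd_mult_div_cancel dvd_triv_right)
      then show ?thesis using True dvd_trans by blast
    qed (use \<open>odd n \<or> even z\<close> in simp)
    then have "sum_within n ?S (2 * card A) (\<Sum>d\<in>A. (z * c d) * int d)"
      using assms(3) by (intro sum_within_lincomb[OF assms(1,2)]) blast
    moreover have "[(\<Sum>d\<in>A. (z * c d) * int d) = z] (mod int n)"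
      using cong_scalar_left[OF c, of z] by (simp add: sum_distrib_left mult.assoc cong_sym_eq)
    ultimately show ?thesis by (rule sum_within_cong)
  qed
  show ?thesis
  proof (cases "odd n \<or> even x")
    case True
    then show ?thesis using within_2 sum_within_mono by (meson le_add1 order_refl)
  next
    case False
    then have "even n" "odd x" by auto
    then obtain d1 where d1: "d1 \<in> A" "odd d1" using generates_Zn_even_ex_odd assms(4) by blast
    then have "d1 \<noteq> n" using \<open>even n\<close> by auto
    then have "d1 \<in> Gn n d1" using assms(1) assms(3)[OF d1(1)] by (intro self_mem_Gn)
    then have "sum_within n ?S 1 (int d1)" using d1(1) by (intro sum_within_single) blast
    moreover have "sum_within n ?S (2 * card A) (x - int d1)"
      using \<open>odd x\<close> d1(2) by (intro within_2) simp
    ultimately have "sum_within n ?S (2 * card A + 1) (x - int d1 + int d1)"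
      using sum_within_add by blast
    then show ?thesis by simp
  qed
qed

lemma sum_list_eq_lincomb:
  assumes "finite A" and "\<forall>x\<in>set xs. \<exists>d\<in>A. d dvd x"
  shows "\<exists>c. int (sum_list xs) = (\<Sum>d\<in>A. c d * int d)"
  using assms(2)
proof (induction xs)
  case Nil
  show ?case by (intro exI[of _ "\<lambda>_. 0"]) simp
next
  case (Cons x xs)
  then obtain c where c: "int (sum_list xs) = (\<Sum>d\<in>A. c d * int d)" by auto
  obtain d q where "d \<in> A" "x = d * q" using Cons.prems by (auto elim!: dvdE)
  define c' where "c' = (\<lambda>e. c e + (if e = d then int q else 0))"
  have "(\<Sum>e\<in>A. c' e * int e) = (\<Sum>e\<in>A. c e * int e + (if e = d then int q * int d else 0))"
    by (intro sum.cong) (auto simp: c'_def algebra_simps)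
  also have "\<dots> = (\<Sum>e\<in>A. c e * int e) + int q * int d"
    using assms(1) \<open>d \<in> A\<close> by (simp add: sum.distrib)
  finally show ?case using c \<open>x = d * q\<close> by (intro exI[of _ c']) simp
qed

lemma generates_Zn_subset_if_sum_within:
  assumes "sum_within n (\<Union>d\<in>D. Gn n d) k 1"
  shows "\<exists>A\<subseteq>D. card A \<le> k \<and> generates_Zn n A"
proof -
  obtain xs where xs: "length xs \<le> k" "set xs \<subseteq> (\<Union>d\<in>D. Gn n d)"
    "[1 = int (sum_list xs)] (mod int n)"
    using assms unfolding sum_within_def by blast
  have "\<exists>d. d \<in> D \<and> d dvd s" if "s \<in> set xs" for s
    using xs(2) that unfolding Gn_def by auto
  then obtain f where f: "\<And>s. s \<in> set xs \<Longrightarrow> f s \<in> D \<and> f s dvd s" by metis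
  have "\<exists>c. int (sum_list xs) = (\<Sum>d\<in>f ` set xs. c d * int d)"
    using f by (intro sum_list_eq_lincomb) auto
  then have "generates_Zn n (f ` set xs)" unfolding generates_Zn_iff using xs(3) by auto
  moreover have "card (f ` set xs) \<le> k"
    using card_image_le[of "set xs" f] card_length[of xs] xs(1) by simp
  ultimately show ?thesis using f by (intro exI[of _ "f ` set xs"]) auto
qed

lemma circ_edges_iff:
  assumes "\<forall>s\<in>S. s < n" "m < n" "j < n"
  shows "(m, j) \<in> circ_edges n S \<longleftrightarrow> (\<exists>s\<in>S. [int m - int j = int s] (mod int n))"
proof
  assume "(m, j) \<in> circ_edges n S"
  then have "nat ((int m - int j) mod int n) \<in> S" unfolding circ_edges_def by simp
  moreover have "int (nat ((int m - int j) mod int n)) = (int m - int j) mod int n"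
    using assms(2) by simp
  ultimately show "\<exists>s\<in>S. [int m - int j = int s] (mod int n)"
    by (metis cong_mod_right cong_refl)
next
  assume "\<exists>s\<in>S. [int m - int j = int s] (mod int n)"
  then obtain s where "s \<in> S" "(int m - int j) mod int n = int s mod int n"
    unfolding cong_def by blast
  moreover have "int s mod int n = int s" using assms(1) \<open>s \<in> S\<close> by simp
  ultimately show "(m, j) \<in> circ_edges n S" using assms(2,3) unfolding circ_edges_def by simp
qed

lemma relpow_circ_edges_iff:
  assumes "\<forall>s\<in>S. s < n" "i < n" "j < n"
  shows "(i, j) \<in> circ_edges n S ^^ k \<longleftrightarrow>
    (\<exists>xs. length xs = k \<and> set xs \<subseteq> S \<and> [int i - int j = int (sum_list xs)] (mod int n))"
  using assms(3)
proof (induction k arbitrary: j)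
  case 0
  have "[int i - int j = 0] (mod int n) \<longleftrightarrow> [i = j] (mod n)"
    by (simp add: cong_0_iff flip: cong_iff_dvd_diff cong_int_iff)
  then show ?case using assms(2) 0 by (simp add: cong_def)
next
  case (Suc k)
  let ?walk = "\<lambda>i j k. \<exists>xs. length xs = k \<and> set xs \<subseteq> S \<and>
    [int i - int j = int (sum_list xs)] (mod int n)"
  have "(i, j) \<in> circ_edges n S ^^ Suc k \<longleftrightarrow>
      (\<exists>m<n. (i, m) \<in> circ_edges n S ^^ k \<and> (m, j) \<in> circ_edges n S)"
    by (auto simp: circ_edges_def)
  also have "\<dots> \<longleftrightarrow> (\<exists>m<n. ?walk i m k \<and> (\<exists>s\<in>S. [int m - int j = int s] (mod int n)))"
    using Suc.IH circ_edges_iff[OF assms(1) _ Suc.prems] by blast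
  also have "\<dots> \<longleftrightarrow> ?walk i j (Suc k)"
  proof
    assume "\<exists>m<n. ?walk i m k \<and> (\<exists>s\<in>S. [int m - int j = int s] (mod int n))"
    then obtain m xs s where "length xs = k" "set xs \<subseteq> S" "s \<in> S"
      "[int i - int m = int (sum_list xs)] (mod int n)" "[int m - int j = int s] (mod int n)"
      by blast
    moreover from this have "[int i - int j = int (sum_list (s # xs))] (mod int n)"
      using cong_add by fastforce
    ultimately show "?walk i j (Suc k)" by (intro exI[of _ "s # xs"]) auto
  next
    assume "?walk i j (Suc k)"
    then obtain s xs where "length xs = k" "set xs \<subseteq> S" "s \<in> S"
      and walk: "[int i - int j = int s + int (sum_list xs)] (mod int n)"
      by (auto simp: length_Suc_conv)
    define m where "m = nat ((int j + int s) mod int n)"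
    have m: "int m = (int j + int s) mod int n" using Suc.prems unfolding m_def by simp
    then have "int m < int n" using Suc.prems by simp
    then have "m < n" by simp
    moreover have "[int m - int j = int s] (mod int n)"
      unfolding m cong_def by (simp add: mod_diff_left_eq)
    moreover have "[int i - int m = int (sum_list xs)] (mod int n)"
      using cong_diff[OF walk cong_refl, of "int s"] unfolding m cong_def
      by (simp add: mod_diff_right_eq algebra_simps)
    ultimately show "\<exists>m<n. ?walk i m k \<and> (\<exists>s\<in>S. [int m - int j = int s] (mod int n))"
      using \<open>length xs = k\<close> \<open>set xs \<subseteq> S\<close> \<open>s \<in> S\<close> by blast
  qed
  finally show ?case .
qed

lemma sum_within_iff_relpow:
  assumes "\<forall>s\<in>S. s < n" "i < n" "j < n"
  shows "sum_within n S k (int i - int j) \<longleftrightarrow> (\<exists>l\<le>k. (i, j) \<in> circ_edges n S ^^ l)"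
  using relpow_circ_edges_iff[OF assms] unfolding sum_within_def by auto

lemma finite_circ_dists: "finite {circ_dist n S i j | i j. i < n \<and> j < n}"
proof (rule finite_subset)
  show "{circ_dist n S i j | i j. i < n \<and> j < n} \<subseteq> (\<lambda>(i, j). circ_dist n S i j) ` ({..<n} \<times> {..<n})"
    by auto
qed simp

lemma circ_diam_le:
  assumes "n > 0" "\<forall>s\<in>S. s < n" and "\<And>x. sum_within n S k x"
  shows "circ_diam n S \<le> k"
proof -
  have "circ_dist n S i j \<le> k" if ij: "i < n" "j < n" for i j
  proof -
    obtain l where "l \<le> k" "(i, j) \<in> circ_edges n S ^^ l"
      using sum_within_iff_relpow[OF assms(2) ij] assms(3) by blast
    then show ?thesis unfolding circ_dist_def by (meson Least_le order_trans)
  qed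
  then show ?thesis
    unfolding circ_diam_def using assms(1) by (intro Max.boundedI[OF finite_circ_dists]) blast+
qed

lemma sum_within_circ_diam:
  assumes "n > 0" "\<forall>s\<in>S. s < n" and "\<And>x. \<exists>k. sum_within n S k x"
  shows "sum_within n S (circ_diam n S) x"
proof -
  define i where "i = nat (x mod int n)"
  have i: "i < n" "int i = x mod int n"
    using assms(1) unfolding i_def by (simp_all add: nat_less_iff)
  obtain k where "sum_within n S k (int i - int 0)" using assms(3) by blast
  then obtain l where "(i, 0) \<in> circ_edges n S ^^ l"
    using sum_within_iff_relpow[OF assms(2) i(1) assms(1)] by blast
  then have "(i, 0) \<in> circ_edges n S ^^ circ_dist n S i 0" unfolding circ_dist_def by (rule LeastI)
  then have "sum_within n S (circ_dist n S i 0) (int i - int 0)"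
    using sum_within_iff_relpow[OF assms(2) i(1) assms(1)] by blast
  moreover have "circ_dist n S i 0 \<le> circ_diam n S"
    unfolding circ_diam_def using i(1) assms(1) by (intro Max_ge[OF finite_circ_dists]) blast
  ultimately have "sum_within n S (circ_diam n S) (int i)" using sum_within_mono by fastforce
  then show ?thesis using sum_within_cong i(2) by (simp add: cong_def)
qed

theorem theorem4:
  fixes n :: nat and D :: "nat set" and t :: nat
  assumes "n > 0"
    and "\<forall>d\<in>D. d dvd n"
    and "Gcd (D \<union> {n}) = 1"
    and "t = Min (card ` {D'. D' \<subseteq> D \<and> generates_Zn n D'})"
  shows "t \<le> circ_diam n (\<Union>d\<in>D. Gn n d) \<and> circ_diam n (\<Union>d\<in>D. Gn n d) \<le> 2 * t + 1"
proof -
  define S where "S = (\<Union>d\<in>D. Gn n d)"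
  define F where "F = {D'. D' \<subseteq> D \<and> generates_Zn n D'}"
  have "finite D" using assms(1,2) by (auto intro: finite_subset[OF _ finite_divisors_nat])
  then have "finite F" unfolding F_def by simp
  have "D \<in> F" unfolding F_def using generates_Zn_if_Gcd_eq_1[OF \<open>finite D\<close> assms(3)] by simp
  then have "t \<in> card ` F"
    unfolding assms(4) F_def[symmetric] using \<open>finite F\<close> by (intro Min_in) auto
  then obtain D0 where D0: "D0 \<subseteq> D" "generates_Zn n D0" "card D0 = t" unfolding F_def by blast
  have S_less: "\<forall>s\<in>S. s < n" using assms(1) unfolding S_def Gn_def by auto
  have "sum_within n (\<Union>d\<in>D0. Gn n d) (2 * card D0 + 1) x" for x
    using sum_within_if_generates_Zn[OF assms(1) finite_subset[OF D0(1) \<open>finite D\<close>] _ D0(2)]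
      assms(2) D0(1) by blast
  then have reach: "sum_within n S (2 * t + 1) x" for x
    unfolding S_def by (rule sum_within_mono) (use D0 in auto)
  then have upper: "circ_diam n S \<le> 2 * t + 1" by (rule circ_diam_le[OF assms(1) S_less])
  have "sum_within n S (circ_diam n S) 1"
    using reach sum_within_circ_diam[OF assms(1) S_less] by blast
  then obtain A where "A \<in> F" "card A \<le> circ_diam n S"
    using generates_Zn_subset_if_sum_within[of n D, folded S_def] unfolding F_def by blast
  moreover have "t \<le> card A"
    unfolding assms(4) F_def[symmetric] using \<open>finite F\<close> \<open>A \<in> F\<close> by simp
  ultimately have "t \<le> circ_diam n S" by simp
  with upper show ?thesis unfolding S_def by simp
qed

end
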